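(* Let $f\in\mathcal{L}^1(\mathbb{R})+BV_0(\mathbb{R})$ be such that $t\mapsto t f(t)$ also belongs to $\mathcal{L}^1(\mathbb{R})+BV_0(\mathbb{R})$. Then the $HK$-Sine Fourier transform $\mathcal{F}^S_{HK}(f)$ belongs to $ACG^*_{loc}(\mathbb{R})$.
   Context: $BV_0(\mathbb{R})$: real functions of bounded variation on $\mathbb{R}$ vanishing at $\pm\infty$; $\mathcal{L}^1(\mathbb{R})+BV_0(\mathbb{R})$ consists of sums $f_1+f_2$, $f_1\in\mathcal{L}^1$, $f_2\in BV_0$ (real-valued). $\mathcal{F}^S_{HK}(f)(s)=\frac{1}{\sqrt{2\pi}}\int_{\mathbb{R}}\sin(sx)f(x)\,dx$ (Henstock–Kurzweil integral over $\mathbb{R}$), and $\mathcal{F}^C_{HK}(f)(s)=\frac{1}{\sqrt{2\pi}}\int_{\mathbb{R}}\cos(sx)f(x)\,dx$, so that $\mathcal{F}_{HK}(f)=\mathcal{F}^C_{HK}(f)-i\mathcal{F}^S_{HK}(f)$. A function $F$ is $AC^*$ on a set $E\subset[a,b]$ if for every $\epsilon>0$ there is $\eta>0$ such that for every finite family of nonoverlapping intervals $[c_k,d_k]$ with endpoints in $E$ and $\sum(d_k-c_k)<\eta$, one has $\sum_k\omega(F,[c_k,d_k])<\epsilon$, where $\omega$ denotes oscillation; $F$ is $ACG^*$ on $[a,b]$ if $F$ is continuous on $[a,b]$ and $[a,b]$ is a countable union of sets on each of which $F$ is $AC^*$. $ACG^*_{loc}(\mathbb{R})$: functions that are $ACG^*$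 on every compact interval. *)

theory Defs
  imports "HOL-Analysis.Analysis"
begin

definition bounded_variation_real :: "(real \<Rightarrow> real) \<Rightarrow> bool" where
  "bounded_variation_real f \<longleftrightarrow>
     (\<exists>M. \<forall>(n::nat) (x::nat \<Rightarrow> real). (\<forall>i<n. x i \<le> x (Suc i)) \<longrightarrow>
        (\<Sum>i<n. \<bar>f (x (Suc i)) - f (x i)\<bar>) \<le> M)"

definition BV0 :: "(real \<Rightarrow> real) \<Rightarrow> bool" where
  "BV0 f \<longleftrightarrow> bounded_variation_real f \<and> (f \<longlongrightarrow> 0) at_top \<and> (f \<longlongrightarrow> 0) at_bot"

definition L1_plus_BV0 :: "(real \<Rightarrow> real) \<Rightarrow> bool" where
  "L1_plus_BV0 f \<longleftrightarrow>
     (\<exists>f1 f2. integrable lebesgue f1 \<and> BV0 f2 \<and> f = (\<lambda>x. f1 x + f2 x))"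

text \<open>HK sine Fourier transform (Henstock--Kurzweil integral over R).\<close>
definition FS_HK :: "(real \<Rightarrow> real) \<Rightarrow> real \<Rightarrow> real" where
  "FS_HK f s = (1 / sqrt (2 * pi)) * integral UNIV (\<lambda>x. sin (s * x) * f x)"

definition osc :: "(real \<Rightarrow> real) \<Rightarrow> real \<Rightarrow> real \<Rightarrow> real" where
  "osc F c d = (SUP p\<in>{c..d} \<times> {c..d}. \<bar>F (fst p) - F (snd p)\<bar>)"

definition AC_star_on :: "(real \<Rightarrow> real) \<Rightarrow> real set \<Rightarrow> bool" where
  "AC_star_on F E \<longleftrightarrow>
     (\<forall>\<epsilon>>0. \<exists>\<eta>>0. \<forall>D::(real \<times> real) set.
        finite D \<and> (\<forall>(c,d)\<in>D. c \<le> d \<and> c \<in> E \<and> d \<in> E) \<and>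
        (\<forall>(c,d)\<in>D. \<forall>(c',d')\<in>D. (c,d) \<noteq> (c',d') \<longrightarrow> {c<..<d} \<inter> {c'<..<d'} = {}) \<and>
        (\<Sum>(c,d)\<in>D. d - c) < \<eta>
        \<longrightarrow> (\<Sum>(c,d)\<in>D. osc F c d) < \<epsilon>)"

definition ACG_star_on :: "(real \<Rightarrow> real) \<Rightarrow> real \<Rightarrow> real \<Rightarrow> bool" where
  "ACG_star_on F a b \<longleftrightarrow>
     continuous_on {a..b} F \<and>
     (\<exists>E::nat \<Rightarrow> real set. (\<Union>n. E n) = {a..b} \<and> (\<forall>n. AC_star_on F (E n)))"

definition ACG_star_loc :: "(real \<Rightarrow> real) \<Rightarrow> bool" where
  "ACG_star_loc F \<longleftrightarrow> (\<forall>a b. a \<le> b \<longrightarrow> ACG_star_on F a b)"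

end

theory Submission
  imports Defs
begin

text \<open>Write \<open>f = f\<^sub>1 + f\<^sub>2\<close> and \<open>x f(x) = g\<^sub>1(x) + g\<^sub>2(x)\<close> with \<open>f\<^sub>1, g\<^sub>1 \<in> L\<^sup>1\<close> and
  \<open>f\<^sub>2, g\<^sub>2 \<in> BV\<^sub>0\<close>. Then \<open>sin(s x) f(x) = sin(s x) W(x) + g\<^sub>2(x) sin(s x) / x\<close> on \<open>|x| \<ge> 1\<close>, where
  \<open>W = f\<close> on \<open>(-1, 1)\<close> and \<open>W = g\<^sub>1 / x\<close> elsewhere, so that \<open>W\<close> and \<open>x W\<close> are integrable.
  The Lebesgue part \<open>A(s) = \<integral> sin(s x) W(x) dx\<close> is Lipschitz with constant \<open>\<integral> |x W|\<close>. The
  remaining Henstock--Kurzweil integral \<open>C(s)\<close> converges by the second mean value theorem, since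
  \<open>g\<^sub>2\<close> is a difference of bounded monotone functions; it is Lipschitz on every half-line
  \<open>[\<delta>, \<infinity>)\<close> because \<open>\<partial>\<^sub>s (sin(s x) / x) = cos(s x)\<close> has primitives bounded by \<open>2 / \<delta>\<close>, and
  it tends to \<open>0\<close> as \<open>s \<rightarrow> 0\<close> because \<open>g\<^sub>2\<close> vanishes at \<open>\<plusminus>\<infinity>\<close>. Hence the odd function
  \<open>F\<^sup>S\<^sub>H\<^sub>K(f)\<close> is continuous at \<open>0\<close> and Lipschitz on \<open>{|s| \<ge> \<delta>}\<close>, so it is \<open>AC\<^sup>*\<close> on each set
  \<open>{0} \<union> {|s| \<ge> 1 / (n + 1)}\<close>; these sets cover every compact interval.\<close>

section \<open>Functions of bounded variation\<close>

definition variation_upto :: "(real \<Rightarrow> real) \<Rightarrow> real \<Rightarrow> real" where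
  "variation_upto f x = Sup {(\<Sum>i<n. \<bar>f (y (Suc i)) - f (y i)\<bar>) | n y.
      (\<forall>i<n. y i \<le> y (Suc i)) \<and> y n \<le> x}"

definition bounded_mono_diff :: "real \<Rightarrow> (real \<Rightarrow> real) \<Rightarrow> bool" where
  "bounded_mono_diff M g \<longleftrightarrow> (\<exists>P Q. mono P \<and> mono Q \<and> (\<forall>x. \<bar>P x\<bar> \<le> M) \<and> (\<forall>x. \<bar>Q x\<bar> \<le> M) \<and>
      (\<forall>x. g x = P x - Q x))"

context
  fixes f :: "real \<Rightarrow> real" and V :: real
  assumes V: "\<forall>n (y :: nat \<Rightarrow> real). (\<forall>i<n. y i \<le> y (Suc i)) \<longrightarrow>
      (\<Sum>i<n. \<bar>f (y (Suc i)) - f (y i)\<bar>) \<le> V"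
begin

lemma variation_sum_le_variation_upto:
  assumes "\<forall>i<n. y i \<le> y (Suc i)" "y n \<le> x"
  shows "(\<Sum>i<n. \<bar>f (y (Suc i)) - f (y i)\<bar>) \<le> variation_upto f x"
  unfolding variation_upto_def
  by (rule cSup_upper) (use assms in blast, unfold bdd_above_def, use V in blast)

lemma variation_upto_bounds: "0 \<le> variation_upto f x" "variation_upto f x \<le> V"
proof -
  show "0 \<le> variation_upto f x"
    using variation_sum_le_variation_upto[of 0 "\<lambda>_. x"] by simp
  show "variation_upto f x \<le> V"
    unfolding variation_upto_def
    by (rule cSup_least) (use V in \<open>auto intro!: exI[of _ 0] exI[of _ "\<lambda>_. x"]\<close>)
qed

lemma mono_variation_upto: "mono (variation_upto f)"
proof (rule monoI)
  fix x x' :: real assume "x \<le> x'"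
  then show "variation_upto f x \<le> variation_upto f x'"
    unfolding variation_upto_def[of f x]
    by (intro cSup_least) (auto intro!: exI[of _ 0] exI[of _ "\<lambda>_. x"] variation_sum_le_variation_upto)
qed

text \<open>Appending the points \<open>x\<close> and \<open>x'\<close> to a partition ending below \<open>x\<close> shows
  \<open>variation_upto f x + (f x' - f x) \<le> variation_upto f x'\<close>.\<close>
lemma mono_variation_upto_minus: "mono (\<lambda>x. variation_upto f x - f x)"
proof (rule monoI)
  fix x x' :: real assume xx': "x \<le> x'"
  have "\<sigma> \<le> variation_upto f x' - (f x' - f x)"
    if \<sigma>: "\<sigma> \<in> {(\<Sum>i<n. \<bar>f (y (Suc i)) - f (y i)\<bar>) | n y. (\<forall>i<n. y i \<le> y (Suc i)) \<and> y n \<le> x}" for \<sigma>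
  proof -
    obtain n y where \<sigma>_def: "\<sigma> = (\<Sum>i<n. \<bar>f (y (Suc i)) - f (y i)\<bar>)"
      and y: "\<forall>i<n. y i \<le> y (Suc i)" "y n \<le> x"
      using \<sigma> by blast
    define z where "z i = (if i \<le> n then y i else if i = Suc n then x else x')" for i
    have "\<forall>i<Suc (Suc n). z i \<le> z (Suc i)"
      using y xx' by (auto simp: z_def less_Suc_eq)
    then have "(\<Sum>i<Suc (Suc n). \<bar>f (z (Suc i)) - f (z i)\<bar>) \<le> variation_upto f x'"
      by (rule variation_sum_le_variation_upto) (simp add: z_def)
    moreover have "(\<Sum>i<Suc (Suc n). \<bar>f (z (Suc i)) - f (z i)\<bar>) =
        (\<Sum>i<n. \<bar>f (z (Suc i)) - f (z i)\<bar>) + \<bar>f x - f (y n)\<bar> + \<bar>f x' - f x\<bar>"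
      by (simp add: z_def)
    moreover have "(\<Sum>i<n. \<bar>f (z (Suc i)) - f (z i)\<bar>) = \<sigma>"
      unfolding \<sigma>_def by (intro sum.cong) (auto simp: z_def)
    ultimately show ?thesis by linarith
  qed
  then have "variation_upto f x \<le> variation_upto f x' - (f x' - f x)"
    unfolding variation_upto_def[of f x]
    by (intro cSup_least) (auto intro!: exI[of _ 0] exI[of _ "\<lambda>_. x"])
  then show "variation_upto f x - f x \<le> variation_upto f x' - f x'" by linarith
qed

lemma bounded_variation_abs_le: "\<bar>f x\<bar> \<le> \<bar>f 0\<bar> + V"
  using V[rule_format, of 1 "\<lambda>i. if i = 0 then min 0 x else max 0 x"]
  by (cases "0 \<le> x") (auto simp: max_def min_def)

end

lemma bounded_variation_real_imp_bounded_mono_diff: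
  assumes "bounded_variation_real f"
  obtains M where "bounded_mono_diff M f"
proof -
  obtain V where V: "\<forall>n (y :: nat \<Rightarrow> real). (\<forall>i<n. y i \<le> y (Suc i)) \<longrightarrow>
      (\<Sum>i<n. \<bar>f (y (Suc i)) - f (y i)\<bar>) \<le> V"
    using assms unfolding bounded_variation_real_def by blast
  have "\<bar>variation_upto f x\<bar> \<le> 2 * V + \<bar>f 0\<bar>" "\<bar>variation_upto f x - f x\<bar> \<le> 2 * V + \<bar>f 0\<bar>" for x
    using variation_upto_bounds[OF V, of x] bounded_variation_abs_le[OF V, of x]
    unfolding abs_le_iff by linarith+
  then have "bounded_mono_diff (2 * V + \<bar>f 0\<bar>) f"
    unfolding bounded_mono_diff_def
    using mono_variation_upto[OF V] mono_variation_upto_minus[OF V] by fastforce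
  then show thesis by (rule that)
qed

lemma bounded_mono_diff_nonneg: "bounded_mono_diff M g \<Longrightarrow> 0 \<le> M"
  unfolding bounded_mono_diff_def by (auto intro: order_trans[OF abs_ge_zero])

lemma bounded_mono_diff_abs_le: "bounded_mono_diff M g \<Longrightarrow> \<bar>g x\<bar> \<le> 2 * M"
  unfolding bounded_mono_diff_def by (smt (verit))

lemma bounded_mono_diff_reflect:
  assumes "bounded_mono_diff M g"
  shows "bounded_mono_diff M (\<lambda>x. g (- x))"
proof -
  obtain P Q where "mono P" "mono Q" "\<forall>x. \<bar>P x\<bar> \<le> M" "\<forall>x. \<bar>Q x\<bar> \<le> M" "\<forall>x. g x = P x - Q x"
    using assms unfolding bounded_mono_diff_def by blast
  then show ?thesis
    unfolding bounded_mono_diff_def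
    by (intro exI[of _ "\<lambda>x. - Q (- x)"] exI[of _ "\<lambda>x. - P (- x)"]) (auto simp: mono_def)
qed

lemma bounded_mono_diff_measurable:
  assumes "bounded_mono_diff M g"
  shows "g \<in> borel_measurable borel"
proof -
  obtain P Q where "mono P" "mono Q" "g = (\<lambda>x. P x - Q x)"
    using assms unfolding bounded_mono_diff_def by blast
  then show ?thesis by (simp add: borel_measurable_diff borel_measurable_mono)
qed

section \<open>Second mean value estimates\<close>

lemma second_mean_value_abs_le:
  fixes g \<phi> :: "real \<Rightarrow> real"
  assumes \<phi>: "\<phi> integrable_on {u..v}" and "u \<le> v"
    and g: "\<And>x y. u \<le> x \<Longrightarrow> x \<le> y \<Longrightarrow> y \<le> v \<Longrightarrow> g x \<le> g y"
    and K: "\<And>\<alpha> \<beta>. u \<le> \<alpha> \<Longrightarrow> \<alpha> \<le> \<beta> \<Longrightarrow> \<beta> \<le> v \<Longrightarrow> \<bar>integral {\<alpha>..\<beta>} \<phi>\<bar> \<le> K"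
  shows "(\<lambda>x. g x * \<phi> x) integrable_on {u..v}"
    and "\<bar>integral {u..v} (\<lambda>x. g x * \<phi> x)\<bar> \<le> (\<bar>g u\<bar> + \<bar>g v\<bar>) * K"
proof -
  obtain c where c: "c \<in> {u..v}" and has_int:
    "((\<lambda>x. g x * \<phi> x) has_integral (g u * integral {u..c} \<phi> + g v * integral {c..v} \<phi>)) {u..v}"
    using second_mean_value_theorem_full[where g = g, OF \<phi> \<open>u \<le> v\<close> g] by blast
  then show "(\<lambda>x. g x * \<phi> x) integrable_on {u..v}" by blast
  have "\<bar>integral {u..c} \<phi>\<bar> \<le> K" "\<bar>integral {c..v} \<phi>\<bar> \<le> K"
    using c by (auto intro: K)
  then have "\<bar>g u * integral {u..c} \<phi>\<bar> \<le> \<bar>g u\<bar> * K" "\<bar>g v * integral {c..v} \<phi>\<bar> \<le> \<bar>g v\<bar> * K"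
    by (simp_all add: abs_mult mult_left_mono)
  then show "\<bar>integral {u..v} (\<lambda>x. g x * \<phi> x)\<bar> \<le> (\<bar>g u\<bar> + \<bar>g v\<bar>) * K"
    unfolding integral_unique[OF has_int] distrib_right by linarith
qed

lemma bounded_mono_diff_integral_abs_le:
  fixes g \<phi> :: "real \<Rightarrow> real"
  assumes g: "bounded_mono_diff M g" and \<phi>: "\<phi> integrable_on {u..v}" and uv: "u \<le> v"
    and K: "\<And>\<alpha> \<beta>. u \<le> \<alpha> \<Longrightarrow> \<alpha> \<le> \<beta> \<Longrightarrow> \<beta> \<le> v \<Longrightarrow> \<bar>integral {\<alpha>..\<beta>} \<phi>\<bar> \<le> K"
  shows "(\<lambda>x. g x * \<phi> x) integrable_on {u..v}"
    and "\<bar>integral {u..v} (\<lambda>x. g x * \<phi> x)\<bar> \<le> 4 * M * K"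
proof -
  obtain P Q where P: "mono P" "\<And>x. \<bar>P x\<bar> \<le> M" and Q: "mono Q" "\<And>x. \<bar>Q x\<bar> \<le> M"
    and gPQ: "\<And>x. g x = P x - Q x"
    using g unfolding bounded_mono_diff_def by blast
  have K0: "0 \<le> K" using K[of u u] uv by fastforce
  have R_smv: "(\<lambda>x. R x * \<phi> x) integrable_on {u..v} \<and> \<bar>integral {u..v} (\<lambda>x. R x * \<phi> x)\<bar> \<le> 2 * M * K"
    if "mono R" "\<And>x. \<bar>R x\<bar> \<le> M" for R
  proof -
    have R: "R x \<le> R y" if "x \<le> y" for x y using \<open>mono R\<close> that by (rule monoD)
    have "(\<bar>R u\<bar> + \<bar>R v\<bar>) * K \<le> (2 * M) * K"
      using that(2)[of u] that(2)[of v] K0 by (intro mult_right_mono) auto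
    then show ?thesis using second_mean_value_abs_le[where g = R, OF \<phi> uv R K] by auto
  qed
  have P_int: "(\<lambda>x. P x * \<phi> x) integrable_on {u..v}"
    and P_le: "\<bar>integral {u..v} (\<lambda>x. P x * \<phi> x)\<bar> \<le> 2 * M * K"
    using R_smv[OF P] by auto
  have Q_int: "(\<lambda>x. Q x * \<phi> x) integrable_on {u..v}"
    and Q_le: "\<bar>integral {u..v} (\<lambda>x. Q x * \<phi> x)\<bar> \<le> 2 * M * K"
    using R_smv[OF Q] by auto
  have g_eq: "(\<lambda>x. g x * \<phi> x) = (\<lambda>x. P x * \<phi> x - Q x * \<phi> x)"
    by (simp add: gPQ algebra_simps)
  show "(\<lambda>x. g x * \<phi> x) integrable_on {u..v}"
    unfolding g_eq using P_int Q_int by (rule integrable_diff)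
  show "\<bar>integral {u..v} (\<lambda>x. g x * \<phi> x)\<bar> \<le> 4 * M * K"
    unfolding g_eq integral_diff[OF P_int Q_int] using P_le Q_le by linarith
qed

lemma has_integral_sin_mult:
  fixes s :: real
  assumes "s \<noteq> 0" "p \<le> q"
  shows "((\<lambda>x. sin (s * x)) has_integral (cos (s * p) - cos (s * q)) / s) {p..q}"
proof -
  have "((\<lambda>x. sin (s * x)) has_integral (- cos (s * q) / s - - cos (s * p) / s)) {p..q}"
  proof (rule fundamental_theorem_of_calculus[OF \<open>p \<le> q\<close>])
    fix x
    have "((\<lambda>x. - cos (s * x) / s) has_real_derivative (sin (s * x) * s / s)) (at x)"
      by (auto intro!: derivative_eq_intros)
    then show "((\<lambda>x. - cos (s * x) / s) has_vector_derivative sin (s * x)) (at x within {p..q})"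
      using \<open>s \<noteq> 0\<close> by (simp add: has_real_derivative_iff_has_vector_derivative has_vector_derivative_at_within)
  qed
  then show ?thesis by (simp add: diff_divide_distrib)
qed

lemma has_integral_cos_mult:
  fixes s :: real
  assumes "s \<noteq> 0" "p \<le> q"
  shows "((\<lambda>x. cos (s * x)) has_integral (sin (s * q) - sin (s * p)) / s) {p..q}"
proof -
  have "((\<lambda>x. cos (s * x)) has_integral (sin (s * q) / s - sin (s * p) / s)) {p..q}"
  proof (rule fundamental_theorem_of_calculus[OF \<open>p \<le> q\<close>])
    fix x
    have "((\<lambda>x. sin (s * x) / s) has_real_derivative (cos (s * x) * s / s)) (at x)"
      by (auto intro!: derivative_eq_intros)
    then show "((\<lambda>x. sin (s * x) / s) has_vector_derivative cos (s * x)) (at x within {p..q})"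
      using \<open>s \<noteq> 0\<close> by (simp add: has_real_derivative_iff_has_vector_derivative has_vector_derivative_at_within)
  qed
  then show ?thesis by (simp add: diff_divide_distrib)
qed

lemma integral_sin_mult_abs_le:
  fixes s :: real
  assumes "s \<noteq> 0" "p \<le> q"
  shows "\<bar>integral {p..q} (\<lambda>x. sin (s * x))\<bar> \<le> 2 / \<bar>s\<bar>"
proof -
  have "\<bar>cos (s * p) - cos (s * q)\<bar> \<le> 2"
    using abs_cos_le_one[of "s * p"] abs_cos_le_one[of "s * q"] by linarith
  then show ?thesis
    using integral_unique[OF has_integral_sin_mult[OF assms]] \<open>s \<noteq> 0\<close>
    by (simp add: abs_divide divide_right_mono)
qed

lemma integral_sin_mult_div_abs_le:
  fixes s :: real
  assumes s: "s \<noteq> 0" and "0 < u" "u \<le> \<alpha>" "\<alpha> \<le> \<beta>"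
  shows "\<bar>integral {\<alpha>..\<beta>} (\<lambda>x. sin (s * x) / x)\<bar> \<le> 4 / (\<bar>s\<bar> * u)"
proof -
  have "\<bar>integral {\<alpha>..\<beta>} (\<lambda>x. (- 1 / x) * sin (s * x))\<bar> \<le> (\<bar>- 1 / \<alpha>\<bar> + \<bar>- 1 / \<beta>\<bar>) * (2 / \<bar>s\<bar>)"
    using assms
    by (intro second_mean_value_abs_le(2) integrable_continuous_interval continuous_intros
        integral_sin_mult_abs_le) (auto simp: frac_le)
  also have "\<dots> \<le> (2 / u) * (2 / \<bar>s\<bar>)"
    using assms frac_le[of 1 1 u \<alpha>] frac_le[of 1 1 u \<beta>] by (intro mult_right_mono) auto
  finally show ?thesis
    by (simp add: integral_neg mult.commute)
qed

lemma integral_cos_mult_abs_le: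
  fixes s :: real
  assumes "s \<noteq> 0" "p \<le> q"
  shows "\<bar>integral {p..q} (\<lambda>x. cos (s * x))\<bar> \<le> 2 / \<bar>s\<bar>"
proof -
  have "\<bar>sin (s * q) - sin (s * p)\<bar> \<le> 2"
    using abs_sin_le_one[of "s * p"] abs_sin_le_one[of "s * q"] by linarith
  then show ?thesis
    using integral_unique[OF has_integral_cos_mult[OF assms]] \<open>s \<noteq> 0\<close>
    by (simp add: abs_divide divide_right_mono)
qed

lemma has_field_derivative_integral_sin_mult_div:
  fixes \<alpha> \<beta> r :: real
  assumes "0 < \<alpha>"
  shows "((\<lambda>s. integral {\<alpha>..\<beta>} (\<lambda>x. sin (s * x) / x)) has_field_derivative
    integral {\<alpha>..\<beta>} (\<lambda>x. cos (r * x))) (at r)"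
  unfolding cbox_interval[symmetric]
proof (rule leibniz_rule_field_derivative[where fx = "\<lambda>r x. cos (r * x)" and U = UNIV])
  fix r x :: real assume "x \<in> cbox \<alpha> \<beta>"
  then have "x \<noteq> 0" using assms by auto
  have "((\<lambda>r. sin (r * x) / x) has_real_derivative (cos (r * x) * x / x)) (at r)"
    by (auto intro!: derivative_eq_intros)
  then show "((\<lambda>r. sin (r * x) / x) has_field_derivative cos (r * x)) (at r within UNIV)"
    using \<open>x \<noteq> 0\<close> by simp
next
  show "(\<lambda>x. sin (r * x) / x) integrable_on cbox \<alpha> \<beta>" for r
    using assms by (intro integrable_continuous continuous_intros) auto
  show "continuous_on (UNIV \<times> cbox \<alpha> \<beta>) (\<lambda>(r, x). cos (r * x))"
    by (auto intro!: continuous_intros simp: split_beta)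
qed auto

lemma lipschitz_on_integral_sin_mult_div:
  fixes \<alpha> \<beta> \<delta> :: real
  assumes "0 < \<alpha>" "0 < \<delta>"
  shows "(2 / \<delta>)-lipschitz_on {\<delta>..} (\<lambda>s. integral {\<alpha>..\<beta>} (\<lambda>x. sin (s * x) / x))"
proof (cases "\<alpha> \<le> \<beta>")
  case False
  then show ?thesis using assms by (simp add: lipschitz_on_def)
next
  case True
  have "norm (integral {\<alpha>..\<beta>} (\<lambda>x. cos (r * x))) \<le> 2 / \<delta>" if "r \<in> {\<delta>..}" for r
  proof -
    have "\<bar>integral {\<alpha>..\<beta>} (\<lambda>x. cos (r * x))\<bar> \<le> 2 / \<bar>r\<bar>"
      using that assms True by (intro integral_cos_mult_abs_le) auto
    also have "\<dots> \<le> 2 / \<delta>" using that assms by (simp add: frac_le)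
    finally show ?thesis by simp
  qed
  then have "norm (integral {\<alpha>..\<beta>} (\<lambda>x. sin (s * x) / x) - integral {\<alpha>..\<beta>} (\<lambda>x. sin (t * x) / x))
      \<le> 2 / \<delta> * norm (s - t)" if "s \<in> {\<delta>..}" "t \<in> {\<delta>..}" for s t
    using that has_field_derivative_integral_sin_mult_div[OF assms(1)]
    by (intro field_differentiable_bound[where S = "{\<delta>..}"])
      (auto simp: convex_real_interval intro: has_field_derivative_at_within)
  then show ?thesis
    using assms unfolding lipschitz_on_def dist_real_def by auto
qed

section \<open>Weighted sine integrals on a half-line\<close>

lemma tendsto_0_imp_abs_le_eventually:
  fixes G :: "real \<Rightarrow> real"
  assumes "(G \<longlongrightarrow> 0) at_top" and "0 < \<epsilon>"
  obtains X where "1 \<le> X" and "\<And>x. X \<le> x \<Longrightarrow> \<bar>G x\<bar> \<le> \<epsilon>"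
proof -
  have "\<forall>\<^sub>F x in at_top. \<bar>G x\<bar> < \<epsilon>"
    using order_tendstoD(2)[OF tendsto_rabs[OF assms(1)]] assms(2) by simp
  then obtain X where "\<And>x. X \<le> x \<Longrightarrow> \<bar>G x\<bar> < \<epsilon>"
    by (auto simp: eventually_at_top_linorder)
  then show thesis by (intro that[of "max X 1"]) (auto intro: less_imp_le)
qed

context
  fixes G :: "real \<Rightarrow> real" and M :: real
  assumes G: "bounded_mono_diff M G"
begin

lemma integrable_sine_weighted:
  assumes "0 < u"
  shows "(\<lambda>x. G x * (sin (s * x) / x)) integrable_on {u..v}"
proof (cases "s = 0 \<or> v < u")
  case True
  then show ?thesis by auto
next
  case False
  then show ?thesis
    using assms integral_sin_mult_div_abs_le[of s u]
    by (intro bounded_mono_diff_integral_abs_le(1)[OF G, where K = "4 / (\<bar>s\<bar> * u)"]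
        integrable_continuous_interval continuous_intros) auto
qed

lemma integral_sine_weighted_tail_le:
  assumes "s \<noteq> 0" "0 < u" "u \<le> v"
  shows "\<bar>integral {u..v} (\<lambda>x. G x * (sin (s * x) / x))\<bar> \<le> 16 * M / (\<bar>s\<bar> * u)"
proof -
  have "\<bar>integral {u..v} (\<lambda>x. G x * (sin (s * x) / x))\<bar> \<le> 4 * M * (4 / (\<bar>s\<bar> * u))"
    using assms integral_sin_mult_div_abs_le[of s u]
    by (intro bounded_mono_diff_integral_abs_le(2)[OF G] integrable_continuous_interval continuous_intros)
      auto
  then show ?thesis by simp
qed

lemma lipschitz_on_integral_sine_weighted:
  assumes "0 < u" "0 < \<delta>"
  shows "(8 * M / \<delta>)-lipschitz_on {\<delta>..} (\<lambda>s. integral {u..v} (\<lambda>x. G x * (sin (s * x) / x)))"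
proof (rule lipschitz_onI)
  show "0 \<le> 8 * M / \<delta>" using bounded_mono_diff_nonneg[OF G] assms by simp
  fix s t assume "s \<in> {\<delta>..}" "t \<in> {\<delta>..}"
  have diff: "integral {u..v} (\<lambda>x. G x * (sin (s * x) / x)) - integral {u..v} (\<lambda>x. G x * (sin (t * x) / x))
      = integral {u..v} (\<lambda>x. G x * (sin (s * x) / x - sin (t * x) / x))"
    by (subst integral_diff[symmetric]) (use assms integrable_sine_weighted in \<open>auto simp: right_diff_distrib\<close>)
  show "dist (integral {u..v} (\<lambda>x. G x * (sin (s * x) / x))) (integral {u..v} (\<lambda>x. G x * (sin (t * x) / x)))
      \<le> 8 * M / \<delta> * dist s t"
  proof (cases "u \<le> v")
    case True
    have "\<bar>integral {\<alpha>..\<beta>} (\<lambda>x. sin (s * x) / x - sin (t * x) / x)\<bar> \<le> 2 / \<delta> * \<bar>s - t\<bar>"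
      if "u \<le> \<alpha>" "\<alpha> \<le> \<beta>" for \<alpha> \<beta>
      using lipschitz_onD[OF lipschitz_on_integral_sin_mult_div[of \<alpha> \<delta> \<beta>]] \<open>s \<in> {\<delta>..}\<close> \<open>t \<in> {\<delta>..}\<close>
        assms that
      by (simp add: dist_real_def integral_diff integrable_continuous_interval continuous_intros)
    then have "\<bar>integral {u..v} (\<lambda>x. G x * (sin (s * x) / x - sin (t * x) / x))\<bar>
        \<le> 4 * M * (2 / \<delta> * \<bar>s - t\<bar>)"
      using assms True
      by (intro bounded_mono_diff_integral_abs_le(2)[OF G] integrable_continuous_interval continuous_intros)
        auto
    moreover have "4 * M * (2 / \<delta> * \<bar>s - t\<bar>) = 8 * M / \<delta> * \<bar>s - t\<bar>" by simp
    ultimately show ?thesis unfolding dist_real_def diff by linarith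
  next
    case False
    then show ?thesis using bounded_mono_diff_nonneg[OF G] assms by simp
  qed
qed

lemma integral_sine_weighted_abs_le_sup:
  assumes "0 < p" "p \<le> q" and B: "\<And>x. x \<in> {p<..q} \<Longrightarrow> \<bar>G x\<bar> \<le> B" and "0 \<le> B"
  shows "\<bar>integral {p..q} (\<lambda>x. G x * (sin (s * x) / x))\<bar> \<le> B * \<bar>s\<bar> * (q - p)"
proof -
  have bound: "norm (G x * (sin (s * x) / x)) \<le> B * \<bar>s\<bar>" if "x \<in> {p..q} - {p}" for x
  proof -
    have "0 < x" using that assms by auto
    then have "\<bar>sin (s * x) / x\<bar> \<le> \<bar>s\<bar>"
      using abs_sin_x_le_abs_x[of "s * x"] by (simp add: abs_mult abs_divide pos_divide_le_eq)
    then show ?thesis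
      unfolding real_norm_def abs_mult using B[of x] that \<open>0 \<le> B\<close> by (intro mult_mono) auto
  qed
  show ?thesis
    using has_integral_bound_real[where S = "{p}", OF _ _ integrable_integral[OF integrable_sine_weighted[of p s q]]
        bound] assms
    by simp
qed

text \<open>Split \<open>[1, v]\<close> at \<open>X\<close>, beyond which \<open>\<bar>G\<bar> \<le> \<epsilon>\<close>, and at \<open>A\<close>; the first two pieces are
  estimated crudely by \<open>\<bar>sin (s x) / x\<bar> \<le> \<bar>s\<bar>\<close>, the last one by the second mean value theorem.\<close>
lemma integral_sine_weighted_split_le:
  assumes "s \<noteq> 0" "1 \<le> X" "X \<le> A" "1 \<le> v" and \<epsilon>: "\<And>x. X \<le> x \<Longrightarrow> \<bar>G x\<bar> \<le> \<epsilon>"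
  shows "\<bar>integral {1..v} (\<lambda>x. G x * (sin (s * x) / x))\<bar>
    \<le> 2 * M * \<bar>s\<bar> * X + \<epsilon> * \<bar>s\<bar> * A + 16 * M / (\<bar>s\<bar> * A)"
proof -
  let ?I = "\<lambda>p q. integral {p..q} (\<lambda>x. G x * (sin (s * x) / x))"
  define X' A' where "X' = min v X" and "A' = min v A"
  have order: "1 \<le> X'" "X' \<le> A'" "A' \<le> v" using assms by (auto simp: X'_def A'_def)
  have combine: "?I p r = ?I p q + ?I q r" if "1 \<le> p" "p \<le> q" "q \<le> r" for p q r
    using that
    by (intro Henstock_Kurzweil_Integration.integral_combine[symmetric] integrable_sine_weighted) auto
  have M0: "0 \<le> M" and \<epsilon>0: "0 \<le> \<epsilon>"
    using bounded_mono_diff_nonneg[OF G] \<epsilon>[of X] by auto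
  have "\<bar>?I 1 X'\<bar> \<le> 2 * M * \<bar>s\<bar> * (X' - 1)"
    using order M0 by (intro integral_sine_weighted_abs_le_sup bounded_mono_diff_abs_le[OF G]) auto
  also have "\<dots> \<le> 2 * M * \<bar>s\<bar> * X"
    using order M0 by (intro mult_left_mono) (auto simp: X'_def)
  finally have first: "\<bar>?I 1 X'\<bar> \<le> 2 * M * \<bar>s\<bar> * X" .
  have "\<bar>?I X' A'\<bar> \<le> \<epsilon> * \<bar>s\<bar> * (A' - X')"
    using order \<epsilon>0 by (intro integral_sine_weighted_abs_le_sup \<epsilon>) (auto simp: X'_def A'_def)
  also have "\<dots> \<le> \<epsilon> * \<bar>s\<bar> * A"
    using order \<epsilon>0 by (intro mult_left_mono) (auto simp: A'_def)
  finally have second: "\<bar>?I X' A'\<bar> \<le> \<epsilon> * \<bar>s\<bar> * A" .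
  have third: "\<bar>?I A' v\<bar> \<le> 16 * M / (\<bar>s\<bar> * A)"
  proof (cases "A \<le> v")
    case True
    then have "A' = A" by (simp add: A'_def)
    then show ?thesis using assms True by (simp only:) (rule integral_sine_weighted_tail_le, auto)
  next
    case False
    then show ?thesis using M0 assms by (simp add: A'_def)
  qed
  have "?I 1 v = ?I 1 X' + ?I X' v" "?I X' v = ?I X' A' + ?I A' v"
    using order by (intro combine; simp)+
  then show ?thesis using first second third by linarith
qed

lemma integral_sine_weighted_uniformly_small:
  assumes lim: "(G \<longlongrightarrow> 0) at_top" and "0 < e"
  obtains \<eta> where "0 < \<eta>"
    "\<And>s v. \<bar>s\<bar> < \<eta> \<Longrightarrow> 1 \<le> v \<Longrightarrow> \<bar>integral {1..v} (\<lambda>x. G x * (sin (s * x) / x))\<bar> \<le> e"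
proof -
  have M0: "0 \<le> M" using bounded_mono_diff_nonneg[OF G] .
  define T where "T = 48 * (M + 1) / e"
  have T0: "0 < T" using \<open>0 < e\<close> M0 by (simp add: T_def)
  obtain X where X1: "1 \<le> X" and X: "\<And>x. X \<le> x \<Longrightarrow> \<bar>G x\<bar> \<le> e / (3 * T)"
    using tendsto_0_imp_abs_le_eventually[OF lim, of "e / (3 * T)"] \<open>0 < e\<close> T0 by auto
  \<comment> \<open>With the second cut point \<open>A = T / \<bar>s\<bar>\<close>, \<open>\<eta>\<close> ensures \<open>X \<le> A\<close> and makes each of the three
    terms of the split estimate at most \<open>e / 3\<close>.\<close>
  define \<eta> where "\<eta> = min (e / (3 * X * (2 * M + 1))) (T / X)"
  show thesis
  proof
    show "0 < \<eta>" using \<open>0 < e\<close> X1 M0 T0 by (simp add: \<eta>_def)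
    fix s v :: real assume s: "\<bar>s\<bar> < \<eta>" and v: "1 \<le> v"
    show "\<bar>integral {1..v} (\<lambda>x. G x * (sin (s * x) / x))\<bar> \<le> e"
    proof (cases "s = 0")
      case True
      then show ?thesis using \<open>0 < e\<close> by simp
    next
      case False
      have "\<bar>s\<bar> * (3 * X * (2 * M + 1)) \<le> e"
        using s X1 M0 by (simp add: \<eta>_def less_divide_eq mult.commute less_imp_le)
      moreover have "0 \<le> \<bar>s\<bar> * X" using X1 by simp
      ultimately have first: "2 * M * \<bar>s\<bar> * X \<le> e / 3" by (simp add: algebra_simps)
      have "\<bar>s\<bar> * X < T" using s X1 by (simp add: \<eta>_def less_divide_eq)
      then have XA: "X \<le> T / \<bar>s\<bar>" using False by (simp add: le_divide_eq mult.commute)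
      have second: "e / (3 * T) * \<bar>s\<bar> * (T / \<bar>s\<bar>) = e / 3" using False T0 by simp
      have "16 * M / (\<bar>s\<bar> * (T / \<bar>s\<bar>)) = 16 * M / T" using False by simp
      also have "\<dots> = e / 3 * (M / (M + 1))"
      proof -
        have "M + 1 \<noteq> 0" using M0 by linarith
        then show ?thesis using \<open>0 < e\<close> by (simp add: T_def field_simps)
      qed
      also have "\<dots> \<le> e / 3"
        using \<open>0 < e\<close> M0 by (intro mult_left_le) auto
      finally have third: "16 * M / (\<bar>s\<bar> * (T / \<bar>s\<bar>)) \<le> e / 3" .
      have "\<bar>integral {1..v} (\<lambda>x. G x * (sin (s * x) / x))\<bar>
          \<le> 2 * M * \<bar>s\<bar> * X + e / (3 * T) * \<bar>s\<bar> * (T / \<bar>s\<bar>) + 16 * M / (\<bar>s\<bar> * (T / \<bar>s\<bar>))"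
        by (rule integral_sine_weighted_split_le[OF False X1 XA v]) (rule X)
      then show ?thesis using first second third by linarith
    qed
  qed
qed

end

section \<open>The tail integral over the real line\<close>

lemma integral_symmetric_approx:
  fixes h :: "real \<Rightarrow> real"
  assumes int: "\<And>a b. h integrable_on {a..b}" and "0 \<le> B" "a \<le> -B" "B \<le> b"
    and tails: "\<And>u v. B \<le> u \<Longrightarrow> u \<le> v \<Longrightarrow> \<bar>integral {u..v} h\<bar> \<le> e \<and> \<bar>integral {-v..-u} h\<bar> \<le> e"
  shows "\<bar>integral {a..b} h - integral {-B..B} h\<bar> \<le> 2 * e"
proof -
  have "integral {a..b} h = integral {a..-B} h + integral {-B..b} h"
    "integral {-B..b} h = integral {-B..B} h + integral {B..b} h"
    using assms by (intro Henstock_Kurzweil_Integration.integral_combine[symmetric] int; simp)+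
  moreover have "\<bar>integral {B..b} h\<bar> \<le> e" "\<bar>integral {a..-B} h\<bar> \<le> e"
    using tails[of B b] tails[of B "-a"] assms by auto
  ultimately show ?thesis by linarith
qed

lemma integrable_on_UNIV_if_small_tails:
  fixes h :: "real \<Rightarrow> real"
  assumes int: "\<And>a b. h integrable_on {a..b}"
    and tails: "\<And>e. 0 < e \<Longrightarrow> \<exists>B. \<forall>u v. B \<le> u \<longrightarrow> u \<le> v \<longrightarrow>
      \<bar>integral {u..v} h\<bar> \<le> e \<and> \<bar>integral {-v..-u} h\<bar> \<le> e"
  shows "h integrable_on UNIV"
  unfolding integrable_alt[of h] cbox_interval
proof (intro conjI allI impI)
  show "(\<lambda>x. if x \<in> UNIV then h x else 0) integrable_on {a..b}" for a b using int by simp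
  fix e :: real assume "0 < e"
  then obtain B0 where B0: "\<forall>u v. B0 \<le> u \<longrightarrow> u \<le> v \<longrightarrow>
      \<bar>integral {u..v} h\<bar> \<le> e / 8 \<and> \<bar>integral {-v..-u} h\<bar> \<le> e / 8"
    using tails[of "e / 8"] by auto
  define B where "B = max B0 0"
  have "0 \<le> B" "B0 \<le> B" by (simp_all add: B_def)
  show "\<exists>B>0. \<forall>a b c d. ball 0 B \<subseteq> {a..b} \<and> ball 0 B \<subseteq> {c..d} \<longrightarrow>
      norm (integral {a..b} (\<lambda>x. if x \<in> UNIV then h x else 0) -
        integral {c..d} (\<lambda>x. if x \<in> UNIV then h x else 0)) < e"
  proof (intro exI[of _ "B + 1"] conjI allI impI)
    have close: "\<bar>integral {a..b} h - integral {-B..B} h\<bar> \<le> e / 4" if "ball 0 (B + 1) \<subseteq> {a..b}" for a b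
    proof -
      have "-B \<in> {a..b}" "B \<in> {a..b}"
        using subsetD[OF that, of "-B"] subsetD[OF that, of B] \<open>0 \<le> B\<close> by auto
      then show ?thesis
        using integral_symmetric_approx[OF int \<open>0 \<le> B\<close>, of a b "e / 8"] B0 \<open>B0 \<le> B\<close> by auto
    qed
    fix a b c d :: real assume "ball 0 (B + 1) \<subseteq> {a..b} \<and> ball 0 (B + 1) \<subseteq> {c..d}"
    then have "dist (integral {a..b} h) (integral {-B..B} h) \<le> e / 4"
      "dist (integral {c..d} h) (integral {-B..B} h) \<le> e / 4"
      using close by (auto simp: dist_real_def)
    moreover have "dist (integral {a..b} h) (integral {c..d} h)
        \<le> dist (integral {a..b} h) (integral {-B..B} h) + dist (integral {c..d} h) (integral {-B..B} h)"
      by (rule dist_triangle2)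
    ultimately show "norm (integral {a..b} (\<lambda>x. if x \<in> UNIV then h x else 0) -
        integral {c..d} (\<lambda>x. if x \<in> UNIV then h x else 0)) < e"
      using \<open>0 < e\<close> by (simp add: dist_real_def)
  qed (use \<open>0 \<le> B\<close> in simp)
qed

lemma tendsto_integral_symmetric_UNIV:
  fixes h :: "real \<Rightarrow> real"
  assumes "h integrable_on UNIV"
  shows "((\<lambda>v. integral {-v..v} h) \<longlongrightarrow> integral UNIV h) at_top"
proof (rule tendstoI)
  fix e :: real assume "0 < e"
  then obtain B where B: "\<And>a b. ball 0 B \<subseteq> cbox a b \<Longrightarrow>
      norm (integral (cbox a b) (\<lambda>x. if x \<in> UNIV then h x else 0) - integral UNIV h) < e"
    using integrable_integral[OF assms] unfolding has_integral_alt' by blast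
  have "dist (integral {-v..v} h) (integral UNIV h) < e" if "B \<le> v" for v
  proof -
    have "ball 0 B \<subseteq> cbox (-v) v" using that by (auto simp: cbox_interval)
    then show ?thesis using B[of "-v" v] by (simp add: cbox_interval dist_real_def)
  qed
  then show "\<forall>\<^sub>F v in at_top. dist (integral {-v..v} h) (integral UNIV h) < e"
    by (rule eventually_at_top_linorderI)
qed

definition outer_sine_integrand :: "(real \<Rightarrow> real) \<Rightarrow> real \<Rightarrow> real \<Rightarrow> real" where
  "outer_sine_integrand G s x = (if \<bar>x\<bar> < 1 then 0 else G x * (sin (s * x) / x))"

lemma outer_sine_integrand_0: "outer_sine_integrand G 0 = (\<lambda>x. 0)"
  by (simp add: outer_sine_integrand_def fun_eq_iff)

lemma outer_sine_integrand_reflect: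
  "outer_sine_integrand G s (- x) = outer_sine_integrand (\<lambda>x. G (- x)) s x"
  by (simp add: outer_sine_integrand_def)

lemma integral_outer_sine_integrand_reflect:
  "integral {-v..-u} (outer_sine_integrand G s) = integral {u..v} (outer_sine_integrand (\<lambda>x. G (- x)) s)"
  using Henstock_Kurzweil_Integration.integral_reflect_real[of v u "\<lambda>x. outer_sine_integrand G s (- x)"]
  by (simp add: outer_sine_integrand_reflect)

lemma integral_outer_sine_integrand_tail_le:
  assumes "bounded_mono_diff M G" "s \<noteq> 0" "1 \<le> u" "u \<le> v"
  shows "\<bar>integral {u..v} (outer_sine_integrand G s)\<bar> \<le> 16 * M / (\<bar>s\<bar> * u)"
proof -
  have "integral {u..v} (outer_sine_integrand G s) = integral {u..v} (\<lambda>x. G x * (sin (s * x) / x))"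
    using assms by (intro integral_cong) (auto simp: outer_sine_integrand_def)
  then show ?thesis
    using integral_sine_weighted_tail_le[OF assms(1,2), of u v] assms by simp
qed

context
  fixes G :: "real \<Rightarrow> real" and M :: real
  assumes G: "bounded_mono_diff M G"
begin

lemma has_integral_outer_sine_integrand_symmetric:
  assumes "1 \<le> v"
  shows "(outer_sine_integrand G s has_integral
    integral {1..v} (\<lambda>x. G x * (sin (s * x) / x)) + integral {1..v} (\<lambda>x. G (- x) * (sin (s * x) / x)))
    {-v..v}"
proof -
  have right: "(outer_sine_integrand G s has_integral integral {1..v} (\<lambda>x. G x * (sin (s * x) / x))) {1..v}"
    by (rule has_integral_eq[OF _ integrable_integral[OF integrable_sine_weighted[OF G]]])
      (auto simp: outer_sine_integrand_def)
  have "((\<lambda>x. outer_sine_integrand G s (- x)) has_integral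
      integral {1..v} (\<lambda>x. G (- x) * (sin (s * x) / x))) {1..v}"
    unfolding outer_sine_integrand_reflect
    by (rule has_integral_eq[OF _ integrable_integral[OF integrable_sine_weighted[OF bounded_mono_diff_reflect[OF G]]]])
      (auto simp: outer_sine_integrand_def)
  then have left: "(outer_sine_integrand G s has_integral
      integral {1..v} (\<lambda>x. G (- x) * (sin (s * x) / x))) {-v..-1}"
    using has_integral_reflect_real[of "\<lambda>x. outer_sine_integrand G s (- x)"] by simp
  have middle: "(outer_sine_integrand G s has_integral 0) {-1..1}"
    by (rule has_integral_spike_finite[where S = "{-1, 1}", OF _ _ has_integral_0])
      (auto simp: outer_sine_integrand_def)
  have "(outer_sine_integrand G s has_integral
      integral {1..v} (\<lambda>x. G (- x) * (sin (s * x) / x)) + 0) {-v..1}"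
    using assms by (intro has_integral_combine[OF _ _ left middle]) auto
  from has_integral_combine[OF _ _ this right] show ?thesis
    using assms by (simp add: add.commute)
qed

lemma integrable_on_outer_sine_integrand_interval: "outer_sine_integrand G s integrable_on {a..b}"
proof -
  define n where "n = max 1 (max \<bar>a\<bar> \<bar>b\<bar>)"
  have "outer_sine_integrand G s integrable_on {-n..n}"
    by (rule has_integral_integrable[OF has_integral_outer_sine_integrand_symmetric]) (simp add: n_def)
  then show ?thesis by (rule integrable_on_subinterval) (auto simp: n_def)
qed

lemma integrable_on_outer_sine_integrand: "outer_sine_integrand G s integrable_on UNIV"
proof (rule integrable_on_UNIV_if_small_tails[OF integrable_on_outer_sine_integrand_interval])
  fix e :: real assume "0 < e"
  show "\<exists>B. \<forall>u v. B \<le> u \<longrightarrow> u \<le> v \<longrightarrow>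
      \<bar>integral {u..v} (outer_sine_integrand G s)\<bar> \<le> e \<and> \<bar>integral {-v..-u} (outer_sine_integrand G s)\<bar> \<le> e"
  proof (cases "s = 0")
    case True
    then show ?thesis by (simp add: outer_sine_integrand_0 \<open>0 < e\<close> less_imp_le)
  next
    case False
    define B where "B = max 1 (16 * M / (\<bar>s\<bar> * e))"
    show ?thesis
    proof (intro exI[of _ B] allI impI conjI)
      fix u v assume "B \<le> u" "u \<le> v"
      then have "1 \<le> u" "16 * M / (\<bar>s\<bar> * e) \<le> u" by (simp_all add: B_def)
      then have bound: "16 * M / (\<bar>s\<bar> * u) \<le> e"
        using False \<open>0 < e\<close> by (simp add: pos_divide_le_eq algebra_simps)
      show "\<bar>integral {u..v} (outer_sine_integrand G s)\<bar> \<le> e"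
        using integral_outer_sine_integrand_tail_le[OF G False \<open>1 \<le> u\<close> \<open>u \<le> v\<close>] bound by linarith
      show "\<bar>integral {-v..-u} (outer_sine_integrand G s)\<bar> \<le> e"
        using integral_outer_sine_integrand_tail_le[OF bounded_mono_diff_reflect[OF G] False \<open>1 \<le> u\<close> \<open>u \<le> v\<close>]
          bound
        unfolding integral_outer_sine_integrand_reflect by linarith
    qed
  qed
qed

lemma tendsto_outer_sine_integral:
  "((\<lambda>v. integral {1..v} (\<lambda>x. G x * (sin (s * x) / x)) + integral {1..v} (\<lambda>x. G (- x) * (sin (s * x) / x)))
     \<longlongrightarrow> integral UNIV (outer_sine_integrand G s)) at_top"
  using tendsto_integral_symmetric_UNIV[OF integrable_on_outer_sine_integrand]
proof (rule Lim_transform_eventually)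
  show "\<forall>\<^sub>F v in at_top. integral {-v..v} (outer_sine_integrand G s) =
    integral {1..v} (\<lambda>x. G x * (sin (s * x) / x)) + integral {1..v} (\<lambda>x. G (- x) * (sin (s * x) / x))"
    using eventually_ge_at_top[of 1]
    by eventually_elim (rule integral_unique[OF has_integral_outer_sine_integrand_symmetric])
qed

lemma lipschitz_on_outer_sine_integral:
  assumes "0 < \<delta>"
  shows "(16 * M / \<delta>)-lipschitz_on {\<delta>..} (\<lambda>s. integral UNIV (outer_sine_integrand G s))"
proof (rule lipschitz_onI)
  show "0 \<le> 16 * M / \<delta>" using bounded_mono_diff_nonneg[OF G] assms by simp
  fix s t assume st: "s \<in> {\<delta>..}" "t \<in> {\<delta>..}"
  let ?T = "\<lambda>r v. integral {1..v} (\<lambda>x. G x * (sin (r * x) / x)) + integral {1..v} (\<lambda>x. G (- x) * (sin (r * x) / x))"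
  have "\<bar>?T s v - ?T t v\<bar> \<le> 16 * M / \<delta> * \<bar>s - t\<bar>" for v
    using lipschitz_onD[OF lipschitz_on_integral_sine_weighted[OF G _ assms, of 1 v] st]
      lipschitz_onD[OF lipschitz_on_integral_sine_weighted[OF bounded_mono_diff_reflect[OF G] _ assms, of 1 v] st]
    by (simp add: dist_real_def abs_le_iff)
  then show "dist (integral UNIV (outer_sine_integrand G s)) (integral UNIV (outer_sine_integrand G t))
      \<le> 16 * M / \<delta> * dist s t"
    unfolding dist_real_def
    by (intro tendsto_upperbound[OF tendsto_rabs[OF tendsto_diff[OF tendsto_outer_sine_integral
          tendsto_outer_sine_integral]]]) auto
qed

lemma isCont_outer_sine_integral:
  assumes "(G \<longlongrightarrow> 0) at_top" and "(G \<longlongrightarrow> 0) at_bot"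
  shows "isCont (\<lambda>s. integral UNIV (outer_sine_integrand G s)) 0"
  unfolding continuous_at_eps_delta dist_real_def
proof (intro allI impI)
  fix e :: real assume "0 < e"
  have G_refl: "((\<lambda>x. G (- x)) \<longlongrightarrow> 0) at_top" using assms(2) by (simp add: filterlim_at_bot_mirror)
  have "0 < e / 4" using \<open>0 < e\<close> by simp
  obtain \<eta>1 where "0 < \<eta>1" and \<eta>1: "\<And>s v. \<bar>s\<bar> < \<eta>1 \<Longrightarrow> 1 \<le> v \<Longrightarrow>
      \<bar>integral {1..v} (\<lambda>x. G x * (sin (s * x) / x))\<bar> \<le> e / 4"
    using integral_sine_weighted_uniformly_small[OF G assms(1) \<open>0 < e / 4\<close>] by auto
  obtain \<eta>2 where "0 < \<eta>2" and \<eta>2: "\<And>s v. \<bar>s\<bar> < \<eta>2 \<Longrightarrow> 1 \<le> v \<Longrightarrow>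
      \<bar>integral {1..v} (\<lambda>x. G (- x) * (sin (s * x) / x))\<bar> \<le> e / 4"
    using integral_sine_weighted_uniformly_small[OF bounded_mono_diff_reflect[OF G] G_refl \<open>0 < e / 4\<close>]
    by auto
  have small: "\<bar>integral UNIV (outer_sine_integrand G s)\<bar> \<le> e / 2" if "\<bar>s\<bar> < min \<eta>1 \<eta>2" for s
  proof (rule tendsto_upperbound[OF tendsto_rabs[OF tendsto_outer_sine_integral]])
    show "\<forall>\<^sub>F v in at_top. \<bar>integral {1..v} (\<lambda>x. G x * (sin (s * x) / x)) +
        integral {1..v} (\<lambda>x. G (- x) * (sin (s * x) / x))\<bar> \<le> e / 2"
      using eventually_ge_at_top[of 1]
    proof eventually_elim
      case (elim v)
      then show ?case
        using \<eta>1[of s v] \<eta>2[of s v] that abs_triangle_ineq[of "integral {1..v} (\<lambda>x. G x * (sin (s * x) / x))"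
          "integral {1..v} (\<lambda>x. G (- x) * (sin (s * x) / x))"]
        by linarith
    qed
  qed simp
  show "\<exists>d>0. \<forall>s. \<bar>s - 0\<bar> < d \<longrightarrow>
      \<bar>integral UNIV (outer_sine_integrand G s) - integral UNIV (outer_sine_integrand G 0)\<bar> < e"
  proof (intro exI[of _ "min \<eta>1 \<eta>2"] conjI allI impI)
    show "0 < min \<eta>1 \<eta>2" using \<open>0 < \<eta>1\<close> \<open>0 < \<eta>2\<close> by simp
    fix s assume "\<bar>s - 0\<bar> < min \<eta>1 \<eta>2"
    then show "\<bar>integral UNIV (outer_sine_integrand G s) - integral UNIV (outer_sine_integrand G 0)\<bar> < e"
      using small[of s] \<open>0 < e\<close> by (simp add: outer_sine_integrand_0)
  qed
qed

end

section \<open>The integrable part and the decomposition\<close>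

lemma abs_sin_diff_le:
  fixes a b :: real
  shows "\<bar>sin a - sin b\<bar> \<le> \<bar>a - b\<bar>"
proof -
  have "\<bar>sin a - sin b\<bar> = 2 * \<bar>sin ((a - b) / 2)\<bar> * \<bar>cos ((a + b) / 2)\<bar>"
    by (simp add: sin_diff_sin abs_mult)
  also have "\<dots> \<le> 2 * \<bar>(a - b) / 2\<bar> * 1"
    by (intro mult_mono abs_sin_x_le_abs_x abs_cos_le_one) auto
  finally show ?thesis by simp
qed

lemma integrable_sin_mult:
  fixes W :: "real \<Rightarrow> real"
  assumes "integrable lebesgue W"
  shows "integrable lebesgue (\<lambda>x. sin (s * x) * W x)"
proof -
  have [measurable]: "W \<in> borel_measurable lebesgue" using assms by (rule borel_measurable_integrable)
  have [measurable]: "(\<lambda>x::real. x) \<in> borel_measurable lebesgue" by (simp add: measurable_completion)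
  show ?thesis
    by (rule Bochner_Integration.integrable_bound[OF assms]) (auto simp: abs_mult intro!: mult_left_le_one_le)
qed

lemma lipschitz_on_sine_transform:
  fixes W :: "real \<Rightarrow> real"
  assumes W: "integrable lebesgue W" and xW: "integrable lebesgue (\<lambda>x. x * W x)"
  shows "(LINT x|lebesgue. \<bar>x * W x\<bar>)-lipschitz_on UNIV (\<lambda>s. LINT x|lebesgue. sin (s * x) * W x)"
proof (rule lipschitz_onI)
  show "0 \<le> (LINT x|lebesgue. \<bar>x * W x\<bar>)" by simp
  fix s t :: real
  have "\<bar>(LINT x|lebesgue. sin (s * x) * W x) - (LINT x|lebesgue. sin (t * x) * W x)\<bar>
      = \<bar>LINT x|lebesgue. sin (s * x) * W x - sin (t * x) * W x\<bar>"
    using integrable_sin_mult[OF W] by simp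
  also have "\<dots> \<le> (LINT x|lebesgue. \<bar>sin (s * x) * W x - sin (t * x) * W x\<bar>)"
    by (rule integral_abs_bound)
  also have "\<dots> \<le> (LINT x|lebesgue. \<bar>s - t\<bar> * \<bar>x * W x\<bar>)"
  proof (rule integral_mono)
    show "integrable lebesgue (\<lambda>x. \<bar>sin (s * x) * W x - sin (t * x) * W x\<bar>)"
      using integrable_sin_mult[OF W] by simp
    show "integrable lebesgue (\<lambda>x. \<bar>s - t\<bar> * \<bar>x * W x\<bar>)"
      using xW by simp
    fix x :: real
    have "\<bar>sin (s * x) * W x - sin (t * x) * W x\<bar> = \<bar>sin (s * x) - sin (t * x)\<bar> * \<bar>W x\<bar>"
      by (simp add: abs_mult[symmetric] algebra_simps)
    also have "\<dots> \<le> \<bar>s * x - t * x\<bar> * \<bar>W x\<bar>"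
      by (intro mult_right_mono abs_sin_diff_le) auto
    also have "\<dots> = \<bar>s - t\<bar> * \<bar>x * W x\<bar>"
      by (simp add: left_diff_distrib[symmetric] abs_mult)
    finally show "\<bar>sin (s * x) * W x - sin (t * x) * W x\<bar> \<le> \<bar>s - t\<bar> * \<bar>x * W x\<bar>" .
  qed
  finally show "dist (LINT x|lebesgue. sin (s * x) * W x) (LINT x|lebesgue. sin (t * x) * W x)
      \<le> (LINT x|lebesgue. \<bar>x * W x\<bar>) * dist s t"
    by (simp add: dist_real_def mult.commute)
qed

text \<open>On \<open>\<bar>x\<bar> \<ge> 1\<close> the weight is \<open>g\<^sub>1 x / x\<close>, so both it and \<open>x\<close> times it are dominated by
  \<open>\<bar>g\<^sub>1\<bar>\<close>; on \<open>[-1, 1]\<close> both are dominated by \<open>\<bar>f\<^sub>1\<bar> + K\<close>.\<close>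
lemma integrable_truncated_weight:
  fixes f f1 f2 g1 :: "real \<Rightarrow> real"
  assumes f1: "integrable lebesgue f1" and g1: "integrable lebesgue g1"
    and f2: "f2 \<in> borel_measurable lebesgue" "\<And>x. \<bar>f2 x\<bar> \<le> K"
    and f: "\<And>x. f x = f1 x + f2 x"
  defines "W \<equiv> \<lambda>x. if \<bar>x\<bar> < 1 then f x else g1 x / x"
  shows "integrable lebesgue W" and "integrable lebesgue (\<lambda>x. x * W x)"
proof -
  have [measurable]: "f1 \<in> borel_measurable lebesgue" "g1 \<in> borel_measurable lebesgue" "f2 \<in> borel_measurable lebesgue"
    using f1 g1 f2 by (auto intro: borel_measurable_integrable)
  have [measurable]: "(\<lambda>x::real. x) \<in> borel_measurable lebesgue"
    by (simp add: measurable_completion)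
  have f_eq: "f = (\<lambda>x. f1 x + f2 x)" using f by auto
  have W_meas [measurable]: "W \<in> borel_measurable lebesgue"
    unfolding W_def f_eq by measurable
  have xW_meas: "(\<lambda>x. x * W x) \<in> borel_measurable lebesgue"
    by measurable
  define B where "B x = \<bar>f1 x\<bar> + \<bar>g1 x\<bar> + indicator {-1..1} x * K" for x
  have B: "integrable lebesgue B"
    unfolding B_def by (intro Bochner_Integration.integrable_add integrable_abs f1 g1 integrable_real_mult_indicator) auto
  have K: "0 \<le> K" using f2(2)[of 0] by linarith
  have bounds: "\<bar>W x\<bar> \<le> B x \<and> \<bar>x * W x\<bar> \<le> B x" for x
  proof (cases "\<bar>x\<bar> < 1")
    case True
    then have "\<bar>f x\<bar> \<le> B x"
      using f[of x] f2(2)[of x] K by (auto simp: B_def indicator_def)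
    moreover have "\<bar>x * f x\<bar> \<le> \<bar>f x\<bar>"
      using True by (simp add: abs_mult mult_left_le_one_le)
    ultimately show ?thesis using True by (simp add: W_def)
  next
    case False
    then have "\<bar>g1 x / x\<bar> \<le> \<bar>g1 x\<bar>"
      by (simp add: abs_divide divide_le_eq mult_le_cancel_left1)
    moreover have "\<bar>g1 x\<bar> \<le> B x"
      using K by (simp add: B_def)
    ultimately show ?thesis using False by (auto simp: W_def)
  qed
  show "integrable lebesgue W"
    using bounds by (intro Bochner_Integration.integrable_bound[OF B W_meas]) (auto intro: order_trans[OF _ abs_ge_self])
  show "integrable lebesgue (\<lambda>x. x * W x)"
    using bounds by (intro Bochner_Integration.integrable_bound[OF B xW_meas]) (auto intro: order_trans[OF _ abs_ge_self])
qed

lemma sine_transform_decomposition: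
  fixes f :: "real \<Rightarrow> real"
  assumes "L1_plus_BV0 f" and "L1_plus_BV0 (\<lambda>t. t * f t)"
  obtains W M g where "integrable lebesgue W" "integrable lebesgue (\<lambda>x. x * W x)"
    "bounded_mono_diff M g" "(g \<longlongrightarrow> 0) at_top" "(g \<longlongrightarrow> 0) at_bot"
    "\<And>s. integral UNIV (\<lambda>x. sin (s * x) * f x) =
      (LINT x|lebesgue. sin (s * x) * W x) + integral UNIV (outer_sine_integrand g s)"
proof -
  obtain f1 f2 where f1: "integrable lebesgue f1" and f2: "BV0 f2" and f: "\<And>x. f x = f1 x + f2 x"
    using assms(1) unfolding L1_plus_BV0_def by auto
  obtain g1 g2 where g1: "integrable lebesgue g1" and g2: "BV0 g2" and xf: "\<And>x. x * f x = g1 x + g2 x"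
    using assms(2) unfolding L1_plus_BV0_def by (metis (no_types, lifting))
  obtain M2 where M2: "bounded_mono_diff M2 f2"
    using f2 unfolding BV0_def by (auto elim: bounded_variation_real_imp_bounded_mono_diff)
  obtain M where M: "bounded_mono_diff M g2"
    using g2 unfolding BV0_def by (auto elim: bounded_variation_real_imp_bounded_mono_diff)
  define W where "W x = (if \<bar>x\<bar> < 1 then f x else g1 x / x)" for x
  have "f2 \<in> borel_measurable lebesgue"
    using bounded_mono_diff_measurable[OF M2] by (simp add: measurable_completion measurable_lborel1)
  then have W: "integrable lebesgue W" "integrable lebesgue (\<lambda>x. x * W x)"
    unfolding W_def
    using integrable_truncated_weight[OF f1 g1 _ bounded_mono_diff_abs_le[OF M2] f]
    by auto
  have split: "sin (s * x) * f x = sin (s * x) * W x + outer_sine_integrand g2 s x" for s x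
  proof (cases "\<bar>x\<bar> < 1")
    case True
    then show ?thesis by (simp add: W_def outer_sine_integrand_def)
  next
    case False
    then have "f x = g1 x / x + g2 x / x"
      using xf[of x] by (auto simp: field_simps)
    then show ?thesis using False by (simp add: W_def outer_sine_integrand_def algebra_simps)
  qed
  have "integral UNIV (\<lambda>x. sin (s * x) * f x) =
      (LINT x|lebesgue. sin (s * x) * W x) + integral UNIV (outer_sine_integrand g2 s)" for s
    unfolding split
    by (intro integral_unique has_integral_add has_integral_integral_lebesgue integrable_sin_mult W
        integrable_integral integrable_on_outer_sine_integrand[OF M])
  moreover have "(g2 \<longlongrightarrow> 0) at_top" "(g2 \<longlongrightarrow> 0) at_bot"
    using g2 unfolding BV0_def by auto
  ultimately show thesis
    using that[OF W M] by simp
qed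

section \<open>ACG* functions\<close>

lemma osc_le_lipschitz:
  assumes "L-lipschitz_on {c..d} F" and "c \<le> d"
  shows "osc F c d \<le> L * (d - c)"
  unfolding osc_def
proof (rule cSUP_least)
  show "{c..d} \<times> {c..d} \<noteq> {}" using assms(2) by auto
  fix p assume p: "p \<in> {c..d} \<times> {c..d}"
  then have "\<bar>F (fst p) - F (snd p)\<bar> \<le> L * \<bar>fst p - snd p\<bar>"
    using lipschitz_onD[OF assms(1)] by (auto simp: dist_real_def)
  also have "\<dots> \<le> L * (d - c)"
    using p lipschitz_on_nonneg[OF assms(1)] by (intro mult_left_mono) auto
  finally show "\<bar>F (fst p) - F (snd p)\<bar> \<le> L * (d - c)" .
qed

lemma AC_star_on_if_lipschitz:
  assumes "0 < r" "0 \<le> L"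
    and lip: "\<And>c d. c \<in> E \<Longrightarrow> d \<in> E \<Longrightarrow> c \<le> d \<Longrightarrow> d - c < r \<Longrightarrow> L-lipschitz_on {c..d} F"
  shows "AC_star_on F E"
  unfolding AC_star_on_def
proof (intro allI impI)
  fix \<epsilon> :: real assume "0 < \<epsilon>"
  show "\<exists>\<eta>>0. \<forall>D. finite D \<and> (\<forall>(c, d)\<in>D. c \<le> d \<and> c \<in> E \<and> d \<in> E) \<and>
      (\<forall>(c, d)\<in>D. \<forall>(c', d')\<in>D. (c, d) \<noteq> (c', d') \<longrightarrow> {c<..<d} \<inter> {c'<..<d'} = {}) \<and>
      (\<Sum>(c, d)\<in>D. d - c) < \<eta> \<longrightarrow> (\<Sum>(c, d)\<in>D. osc F c d) < \<epsilon>"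
  proof (intro exI[of _ "min r (\<epsilon> / (L + 1))"] conjI allI impI)
    show "0 < min r (\<epsilon> / (L + 1))" using assms \<open>0 < \<epsilon>\<close> by simp
    fix D :: "(real \<times> real) set"
    assume "finite D \<and> (\<forall>(c, d)\<in>D. c \<le> d \<and> c \<in> E \<and> d \<in> E) \<and>
      (\<forall>(c, d)\<in>D. \<forall>(c', d')\<in>D. (c, d) \<noteq> (c', d') \<longrightarrow> {c<..<d} \<inter> {c'<..<d'} = {}) \<and>
      (\<Sum>(c, d)\<in>D. d - c) < min r (\<epsilon> / (L + 1))"
    then have D: "finite D" "\<And>c d. (c, d) \<in> D \<Longrightarrow> c \<le> d \<and> c \<in> E \<and> d \<in> E"
      and short: "(\<Sum>(c, d)\<in>D. d - c) < min r (\<epsilon> / (L + 1))"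
      by auto
    have "osc F c d \<le> L * (d - c)" if "(c, d) \<in> D" for c d
    proof (rule osc_le_lipschitz[OF lip])
      have "d - c \<le> (\<Sum>(c, d)\<in>D. d - c)"
        using member_le_sum[of "(c, d)" D "\<lambda>(c, d). d - c"] that D by (force simp: split_beta)
      then show "d - c < r" using short by linarith
    qed (use D that in auto)
    then have "(\<Sum>(c, d)\<in>D. osc F c d) \<le> L * (\<Sum>(c, d)\<in>D. d - c)"
      by (auto intro: sum_mono simp: sum_distrib_left split_beta)
    also have "\<dots> \<le> L * (\<epsilon> / (L + 1))"
      using short assms by (intro mult_left_mono) auto
    also have "\<dots> < \<epsilon>"
      using assms \<open>0 < \<epsilon>\<close> by (simp add: field_simps)
    finally show "(\<Sum>(c, d)\<in>D. osc F c d) < \<epsilon>" .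
  qed
qed

lemma lipschitz_on_atMost_if_odd:
  fixes F :: "real \<Rightarrow> real"
  assumes odd: "\<And>s. F (- s) = - F s" and L: "L-lipschitz_on {\<delta>..} F"
  shows "L-lipschitz_on {..-\<delta>} F"
proof (rule lipschitz_onI)
  fix s t assume "s \<in> {..-\<delta>}" "t \<in> {..-\<delta>}"
  then have "dist (F (- s)) (F (- t)) \<le> L * dist (- s) (- t)"
    by (intro lipschitz_onD[OF L]) auto
  then show "dist (F s) (F t) \<le> L * dist s t"
    by (simp add: odd dist_real_def abs_minus_commute)
qed (rule lipschitz_on_nonneg[OF L])

lemma continuous_on_if_odd_lipschitz_away_from_0:
  fixes F :: "real \<Rightarrow> real"
  assumes odd: "\<And>s. F (- s) = - F s" and cont: "isCont F 0"
    and lip: "\<And>\<delta>. 0 < \<delta> \<Longrightarrow> \<exists>L. L-lipschitz_on {\<delta>..} F"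
  shows "continuous_on S F"
proof -
  have "isCont F s" if s: "s \<noteq> 0" for s
  proof -
    obtain L where L: "L-lipschitz_on {\<bar>s\<bar> / 2..} F"
      using lip[of "\<bar>s\<bar> / 2"] s by auto
    have "{\<bar>s\<bar> / 2<..} \<subseteq> {\<bar>s\<bar> / 2..}" "{..<-(\<bar>s\<bar> / 2)} \<subseteq> {..-(\<bar>s\<bar> / 2)}" by auto
    then have "continuous_on {\<bar>s\<bar> / 2<..} F" "continuous_on {..<-(\<bar>s\<bar> / 2)} F"
      using L lipschitz_on_atMost_if_odd[OF odd L]
      by (auto intro: lipschitz_on_continuous_on lipschitz_on_subset)
    then show ?thesis
      using s by (cases "0 < s") (auto simp: continuous_on_eq_continuous_at)
  qed
  then show ?thesis
    using cont by (metis continuous_at_imp_continuous_on)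
qed

lemma UN_away_from_0: "(\<Union>n. {s \<in> S. s = 0 \<or> 1 / (real n + 1) \<le> \<bar>s\<bar>}) = S"
proof -
  have "\<exists>n. 1 / (real n + 1) \<le> \<bar>s\<bar>" if "s \<noteq> 0" for s :: real
  proof -
    have "0 < \<bar>s\<bar>" using that by simp
    then obtain n where "inverse (real (Suc n)) < \<bar>s\<bar>" by (blast dest: reals_Archimedean)
    then show ?thesis by (intro exI[of _ n]) (simp add: field_simps)
  qed
  then show ?thesis by auto
qed

text \<open>Adding \<open>0\<close> to \<open>{s. \<delta> \<le> \<bar>s\<bar>}\<close> is harmless: an interval shorter than \<open>\<delta>\<close> with endpoints in
  the enlarged set is degenerate or lies on one side of \<open>0\<close>, where \<open>F\<close> is Lipschitz.\<close>
lemma ACG_star_loc_if_odd_lipschitz_away_from_0: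
  fixes F :: "real \<Rightarrow> real"
  assumes odd: "\<And>s. F (- s) = - F s" and cont: "isCont F 0"
    and lip: "\<And>\<delta>. 0 < \<delta> \<Longrightarrow> \<exists>L. L-lipschitz_on {\<delta>..} F"
  shows "ACG_star_loc F"
proof -
  have AC: "AC_star_on F {s \<in> S. s = 0 \<or> 1 / (real n + 1) \<le> \<bar>s\<bar>}" for S n
  proof -
    define \<delta> where "\<delta> = 1 / (real n + 1)"
    have "0 < \<delta>" by (simp add: \<delta>_def)
    then obtain L where L: "L-lipschitz_on {\<delta>..} F" using lip by blast
    note L' = lipschitz_on_atMost_if_odd[OF odd L]
    show ?thesis
    proof (rule AC_star_on_if_lipschitz[OF \<open>0 < \<delta>\<close> lipschitz_on_nonneg[OF L]], unfold \<delta>_def[symmetric])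
      fix c d assume "c \<in> {s \<in> S. s = 0 \<or> \<delta> \<le> \<bar>s\<bar>}" "d \<in> {s \<in> S. s = 0 \<or> \<delta> \<le> \<bar>s\<bar>}"
        "c \<le> d" "d - c < \<delta>"
      then consider "c = d" | "{c..d} \<subseteq> {\<delta>..}" | "{c..d} \<subseteq> {..-\<delta>}"
        by (cases "0 \<le> c"; cases "0 \<le> d") auto
      then show "L-lipschitz_on {c..d} F"
        by cases (auto intro: lipschitz_on_subset[OF L] lipschitz_on_subset[OF L']
            simp: lipschitz_on_nonneg[OF L])
    qed
  qed
  show ?thesis
    unfolding ACG_star_loc_def ACG_star_on_def
  proof (intro allI impI conjI)
    fix a b :: real
    show "continuous_on {a..b} F"
      by (rule continuous_on_if_odd_lipschitz_away_from_0[OF odd cont lip])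
    show "\<exists>E :: nat \<Rightarrow> real set. (\<Union>n. E n) = {a..b} \<and> (\<forall>n. AC_star_on F (E n))"
      using UN_away_from_0[of "{a..b}"] AC[of "{a..b}"] by auto
  qed
qed

lemma FS_HK_odd: "FS_HK f (- s) = - FS_HK f s"
proof -
  have "(\<lambda>x. sin (- s * x) * f x) = (\<lambda>x. - (sin (s * x) * f x))" by auto
  then show ?thesis unfolding FS_HK_def by (simp add: integral_neg)
qed

theorem mainTheorem6:
  fixes f :: "real \<Rightarrow> real"
  assumes "L1_plus_BV0 f"
    and "L1_plus_BV0 (\<lambda>t. t * f t)"
  shows "ACG_star_loc (FS_HK f)"
proof -
  obtain W M g where W: "integrable lebesgue W" "integrable lebesgue (\<lambda>x. x * W x)"
    and g: "bounded_mono_diff M g" "(g \<longlongrightarrow> 0) at_top" "(g \<longlongrightarrow> 0) at_bot"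
    and split: "\<And>s. integral UNIV (\<lambda>x. sin (s * x) * f x) =
      (LINT x|lebesgue. sin (s * x) * W x) + integral UNIV (outer_sine_integrand g s)"
    by (rule sine_transform_decomposition[OF assms]) (rule that)
  define A where "A s = (LINT x|lebesgue. sin (s * x) * W x)" for s
  define C where "C s = integral UNIV (outer_sine_integrand g s)" for s
  have FS: "FS_HK f = (\<lambda>s. 1 / sqrt (2 * pi) * (A s + C s))"
    by (simp add: fun_eq_iff FS_HK_def split A_def C_def)
  have A_lip: "(LINT x|lebesgue. \<bar>x * W x\<bar>)-lipschitz_on UNIV A"
    unfolding A_def by (rule lipschitz_on_sine_transform[OF W])
  show ?thesis
  proof (rule ACG_star_loc_if_odd_lipschitz_away_from_0)
    show "FS_HK f (- s) = - FS_HK f s" for s by (rule FS_HK_odd)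
    have "isCont A 0" using lipschitz_on_continuous_on[OF A_lip] by (simp add: continuous_on_eq_continuous_at)
    then show "isCont (FS_HK f) 0"
      using isCont_outer_sine_integral[OF g] unfolding FS C_def by (intro continuous_intros)
    show "\<exists>L. L-lipschitz_on {\<delta>..} (FS_HK f)" if "0 < \<delta>" for \<delta>
    proof
      show "(\<bar>1 / sqrt (2 * pi)\<bar> * ((LINT x|lebesgue. \<bar>x * W x\<bar>) + 16 * M / \<delta>))-lipschitz_on {\<delta>..} (FS_HK f)"
        unfolding FS C_def
        by (intro lipschitz_on_cmult_real lipschitz_on_add lipschitz_on_outer_sine_integral[OF g(1) that]
            lipschitz_on_subset[OF A_lip]) simp
    qed
  qed
qed

end
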